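(* Let $\lambda$ be the uniform distribution on $[0,1]$. There is no regression estimation procedure that is $L_2(\lambda)$-consistent for the family of stable sequences $(\mathbf{x},\mathbf{y})$ with $x_i\in[0,1]$ and $y_i\in\{0,1\}$ for all $i$, having limiting distribution $\lambda$ and limiting regression $m$ with $V(m:0,1)<\infty$. That is, for every regression estimation procedure $\Phi=\{\phi_1,\phi_2,\ldots\}$ there exist a measurable $m:\mathbb{R}\to\mathbb{R}$ with $\int|m|\,d\lambda<\infty$ and $V(m:0,1)<\infty$ and a pair $(\mathbf{x},\mathbf{y})\in\Omega(\lambda,m)$ with $x_i\in[0,1]$, $y_i\in\{0,1\}$ for all $i$, such that $\int\big(\phi_n(x;(x_1,y_1),\ldots,(x_n,y_n))-m(x)\big)^2\lambda(dx)$ does not converge to $0$ as $n\to\infty$.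
   Context: For a probability distribution $\mu$ on $\mathbb{R}$ and a measurable $m:\mathbb{R}\to\mathbb{R}$ with $\int|m|\,d\mu<\infty$, set $\nu(A)=\int_A m\,d\mu$. For real sequences $\mathbf{x}=(x_1,x_2,\ldots)$, $\mathbf{y}=(y_1,y_2,\ldots)$ let $\hat\mu_n(A)=\frac1n\sum_{i=1}^nI\{x_i\in A\}$ and $\hat\nu_n(A)=\frac1n\sum_{i=1}^ny_iI\{x_i\in A\}$. The pair $(\mathbf{x},\mathbf{y})$ is in $\Omega(\mu,m)$ (stable with limiting distribution $\mu$ and limiting regression $m$) if for every $t\in\mathbb{R}$: $\hat\mu_n(-\infty,t]\to\mu(-\infty,t]$, $\hat\mu_n(\{t\})\to\mu(\{t\})$, $\hat\nu_n(-\infty,t]\to\nu(-\infty,t]$, $\hat\nu_n(\{t\})\to\nu(\{t\})$. The total variation of $h$ on $(a,b]$ is $V(h:a,b)=\sup\sum_{i=1}^n|h(t_i)-h(t_{i-1})|$ over all finite $a<t_0<\cdots<t_n=b$. A regression estimation procedure is a sequence $\Phi=\{\phi_n\}$ where $\phi_n$ assigns to each finite sample $(x_1,y_1),\ldots,(x_n,y_n)$ a measurable function $\phi_n(\cdot;(x_1,y_1),\ldots,(x_n,y_n)):\mathbb{R}\to\mathbb{R}$; it is $L_2(\lambda)$-consistent for a family of pairs if for every pair in the family, with limiting regression $m$, $\int(\phi_n(x;(x_1,y_1),\ldots,(x_n,y_n))-m(x))^2\lambda(dx)\to0$. *)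

theory Defs
  imports "HOL-Analysis.Analysis"
begin

definition unif01 :: "real measure" where
  "unif01 = uniform_measure lborel {0..1}"

text \<open>Empirical measures; the sample x_1,...,x_n is x 0, ..., x (n-1).\<close>
definition emp_mu :: "(nat \<Rightarrow> real) \<Rightarrow> nat \<Rightarrow> real set \<Rightarrow> real" where
  "emp_mu x n A = (\<Sum>i<n. indicator A (x i)) / real n"

definition emp_nu :: "(nat \<Rightarrow> real) \<Rightarrow> (nat \<Rightarrow> real) \<Rightarrow> nat \<Rightarrow> real set \<Rightarrow> real" where
  "emp_nu x y n A = (\<Sum>i<n. y i * indicator A (x i)) / real n"

definition reg_nu :: "real measure \<Rightarrow> (real \<Rightarrow> real) \<Rightarrow> real set \<Rightarrow> real" where
  "reg_nu \<mu> m A = (LINT u:A|\<mu>. m u)"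

definition stable :: "real measure \<Rightarrow> (real \<Rightarrow> real) \<Rightarrow> (nat \<Rightarrow> real) \<Rightarrow> (nat \<Rightarrow> real) \<Rightarrow> bool" where
  "stable \<mu> m x y \<longleftrightarrow>
     (\<forall>t::real.
        (\<lambda>n. emp_mu x n {..t}) \<longlonglongrightarrow> measure \<mu> {..t} \<and>
        (\<lambda>n. emp_mu x n {t}) \<longlonglongrightarrow> measure \<mu> {t} \<and>
        (\<lambda>n. emp_nu x y n {..t}) \<longlonglongrightarrow> reg_nu \<mu> m {..t} \<and>
        (\<lambda>n. emp_nu x y n {t}) \<longlonglongrightarrow> reg_nu \<mu> m {t})"

definition total_var :: "(real \<Rightarrow> real) \<Rightarrow> real \<Rightarrow> real \<Rightarrow> ereal" where
  "total_var h a b =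
     (SUP p \<in> {(n, t). a < t 0 \<and> (\<forall>i<n. t i < t (Suc i)) \<and> t n = b}.
        ereal (\<Sum>i<fst p. \<bar>h (snd p (Suc i)) - h (snd p i)\<bar>))"

definition sample :: "(nat \<Rightarrow> real) \<Rightarrow> (nat \<Rightarrow> real) \<Rightarrow> nat \<Rightarrow> (real \<times> real) list" where
  "sample x y n = map (\<lambda>i. (x i, y i)) [0..<n]"

definition reg_procedure :: "(nat \<Rightarrow> (real \<times> real) list \<Rightarrow> real \<Rightarrow> real) \<Rightarrow> bool" where
  "reg_procedure phi \<longleftrightarrow> (\<forall>n s. phi n s \<in> borel_measurable borel)"

end

theory Submission
  imports Defs "HOL-Library.Nat_Bijection" "HOL-Real_Asymp.Real_Asymp"
begin

text \<open>
  The design points run through the grids a/(s+1), a = 0, ..., s, so their empirical distribution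
  function is within O(1/sqrt n) of the uniform one. The labels are y_i = comb_(k_i)(x_i), where comb_k
  is the indicator of the left halves of the dyadic intervals of length 2^(-k) and k_i is a nondecreasing,
  slowly growing rank. If the rank is eventually k, the pair is stable with limiting regression comb_k;
  if it tends to infinity, the pair is stable with limiting regression 1/2, because comb_k integrates
  to t/2 + O(2^(-k)) over [0,t].

  A consistent procedure would learn comb_k from every schedule frozen at rank k, so a diagonal argument
  produces an unbounded schedule along which, infinitely often, the estimate is within L2-distance 1/4 of
  some comb_k. As every 0-1 valued function has L2-distance 1/2 from the constant 1/2, these estimates
  cannot converge to the limiting regression 1/2.
\<close>

section \<open>The uniform distribution on [0,1]\<close>

definition unif01_cdf :: "real \<Rightarrow> real" where
  "unif01_cdf t = max 0 (min 1 t)"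

lemma sets_unif01 [simp, measurable_cong]: "sets unif01 = sets borel"
  and space_unif01 [simp]: "space unif01 = UNIV"
  by (auto simp: unif01_def)

lemma emeasure_unif01: "B \<in> sets borel \<Longrightarrow> emeasure unif01 B = emeasure lborel ({0..1} \<inter> B)"
  unfolding unif01_def by (subst emeasure_uniform_measure) (auto simp: divide_ennreal_def)

lemma measure_unif01: "B \<in> sets borel \<Longrightarrow> measure unif01 B = measure lborel ({0..1} \<inter> B)"
  unfolding unif01_def by (subst measure_uniform_measure) auto

lemma emeasure_unif01_UNIV: "emeasure unif01 UNIV = 1"
  by (simp add: emeasure_unif01)

interpretation unif01: finite_measure unif01
  by (rule finite_measureI) (simp add: emeasure_unif01_UNIV)

lemma measure_unif01_atMost: "measure unif01 {..t} = unif01_cdf t"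
proof -
  have "{0..1} \<inter> {..t} = {0..min 1 t}" by auto
  thus ?thesis by (simp add: measure_unif01 unif01_cdf_def)
qed

lemma measure_unif01_atMost_atLeast:
  assumes "0 \<le> a" "a \<le> 1"
  shows "measure unif01 ({..t} \<inter> {a..}) = max 0 (unif01_cdf t - a)"
proof -
  have "{0..1} \<inter> ({..t} \<inter> {a..}) = {a..min 1 t}" using assms by auto
  thus ?thesis using assms by (simp add: measure_unif01 unif01_cdf_def)
qed

lemma measure_unif01_singleton: "measure unif01 {t} = 0"
proof -
  have "{0..1} \<inter> {t} = (if t \<in> {0..1} then {t} else {})" by auto
  thus ?thesis by (simp add: measure_unif01)
qed

lemma reg_nu_const: "A \<in> sets borel \<Longrightarrow> reg_nu unif01 (\<lambda>_. c) A = c * measure unif01 A"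
  unfolding reg_nu_def by (subst set_integral_const) auto

section \<open>An equidistributed grid\<close>

text \<open>The points a/(s+1) for a = 0, ..., s, listed for s = 0, 1, 2, ... in turn.\<close>
definition grid :: "nat \<Rightarrow> real" where
  "grid i = (case prod_decode i of (a, b) \<Rightarrow> real a / real (a + b + 1))"

lemma grid_triangle_add: "a \<le> s \<Longrightarrow> grid (triangle s + a) = real a / real (s + 1)"
  by (simp add: grid_def prod_decode_triangle_add prod_decode_aux.simps)

lemma grid_bounds: "0 \<le> grid i" "grid i < 1"
  by (auto simp: grid_def split: prod.splits)

definition grid_count :: "real set \<Rightarrow> nat \<Rightarrow> real" where
  "grid_count A n = (\<Sum>i<n. indicator A (grid i))"

definition grid_disc :: "nat \<Rightarrow> real" where
  "grid_disc n = sqrt (8 * real n + 1)"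

lemma grid_disc_nonneg: "0 \<le> grid_disc n"
  by (simp add: grid_disc_def)

lemma grid_disc_mono: "m \<le> n \<Longrightarrow> grid_disc m \<le> grid_disc n"
  by (simp add: grid_disc_def)

lemma grid_disc_over_n_tendsto: "(\<lambda>n. grid_disc n / real n) \<longlonglongrightarrow> 0"
  unfolding grid_disc_def by real_asymp

lemma sum_lessThan_add:
  fixes f :: "nat \<Rightarrow> 'a::comm_monoid_add"
  shows "(\<Sum>i<m + k. f i) = (\<Sum>i<m. f i) + (\<Sum>j<k. f (m + j))"
  by (induction k) (auto simp: ac_simps)

lemma card_nat_le_real:
  assumes "0 \<le> c"
  shows "card {a. a < r \<and> real a \<le> c} = min r (nat \<lfloor>c\<rfloor> + 1)"
proof -
  have "real a \<le> c \<longleftrightarrow> a < nat \<lfloor>c\<rfloor> + 1" for a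
  proof -
    have "real a \<le> c \<longleftrightarrow> int a \<le> \<lfloor>c\<rfloor>" by (simp add: le_floor_iff)
    also have "\<dots> \<longleftrightarrow> a < nat \<lfloor>c\<rfloor> + 1" using assms by linarith
    finally show ?thesis .
  qed
  hence "{a. a < r \<and> real a \<le> c} = {..<min r (nat \<lfloor>c\<rfloor> + 1)}"
    by (intro set_eqI) (simp only: mem_Collect_eq lessThan_iff min_less_iff_conj)
  thus ?thesis by simp
qed

lemma grid_count_atMost_block:
  assumes "0 \<le> u" "r \<le> s + 1"
  shows "(\<Sum>a<r. indicator {..u} (grid (triangle s + a)) :: real) = real (min r (nat \<lfloor>u * real (s + 1)\<rfloor> + 1))"
proof -
  have "(\<Sum>a<r. indicator {..u} (grid (triangle s + a)) :: real) = (\<Sum>a<r. if real a \<le> u * real (s + 1) then 1 else 0)"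
    using assms by (intro sum.cong) (auto simp: grid_triangle_add divide_le_eq indicator_def)
  also have "\<dots> = real (card {a. a < r \<and> real a \<le> u * real (s + 1)})"
    by (simp add: sum.If_cases Int_def conj_commute)
  finally show ?thesis using assms by (simp add: card_nat_le_real)
qed

lemma grid_count_full: "{0..<1} \<subseteq> A \<Longrightarrow> grid_count A n = real n"
  using grid_bounds by (auto simp: grid_count_def indicator_def subset_iff)

lemma grid_count_empty: "A \<inter> {0..<1} = {} \<Longrightarrow> grid_count A n = 0"
  using grid_bounds by (auto simp: grid_count_def indicator_def disjoint_iff intro!: sum.neutral)

lemma grid_count_mono: "A \<subseteq> B \<Longrightarrow> grid_count A n \<le> grid_count B n"
  unfolding grid_count_def by (intro sum_mono) (auto simp: indicator_def)

lemma grid_count_diff: "B \<subseteq> A \<Longrightarrow> grid_count (A - B) n = grid_count A n - grid_count B n"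
  unfolding grid_count_def sum_subtractf[symmetric] by (intro sum.cong) (auto simp: indicator_def)

lemma floor_block_bounds:
  assumes "0 \<le> u" "u < 1" "r \<le> s + 1"
  defines "c \<equiv> real (min r (nat \<lfloor>u * real (s + 1)\<rfloor> + 1))"
  shows "real r * u \<le> c" "c \<le> real r" "r = s + 1 \<Longrightarrow> c \<le> real (s + 1) * u + 1"
proof -
  have fl: "real (nat \<lfloor>u * real (s + 1)\<rfloor> + 1) = real_of_int \<lfloor>u * real (s + 1)\<rfloor> + 1"
    using assms by simp
  have "real r * u \<le> u * real (s + 1)" using assms by (simp add: mult.commute mult_left_mono)
  moreover have "real r * u \<le> real r" using assms by (simp add: mult_left_le)
  ultimately show "real r * u \<le> c" unfolding c_def using fl by linarith
  show "c \<le> real r" by (simp add: c_def)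
  show "r = s + 1 \<Longrightarrow> c \<le> real (s + 1) * u + 1"
    unfolding c_def using fl by (simp add: mult.commute) linarith
qed

lemma grid_count_atMost_triangle:
  assumes "0 \<le> u" "u < 1"
  shows "real (triangle s) * u \<le> grid_count {..u} (triangle s)
         \<and> grid_count {..u} (triangle s) \<le> real (triangle s) * u + real s"
proof (induction s)
  case 0 show ?case by (simp add: grid_count_def)
next
  case (Suc s)
  let ?c = "real (min (s + 1) (nat \<lfloor>u * real (s + 1)\<rfloor> + 1))"
  have "grid_count {..u} (triangle (Suc s)) = grid_count {..u} (triangle s) + ?c"
    unfolding grid_count_def triangle_Suc sum_lessThan_add using assms
    by (simp add: grid_count_atMost_block[of u "Suc s" s, simplified])
  moreover have "real (s + 1) * u \<le> ?c" "?c \<le> real (s + 1) * u + 1"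
    using floor_block_bounds[OF assms, of "s + 1" s] by simp_all
  moreover have "real (triangle (Suc s)) = real (triangle s) + real (s + 1)" by simp
  ultimately show ?case using Suc by (simp add: algebra_simps)
qed

lemma grid_count_atMost_bounds:
  assumes "0 \<le> u" "u < 1"
  shows "real n * u \<le> grid_count {..u} n \<and> grid_count {..u} n \<le> real n * u + grid_disc n"
proof -
  obtain r b where rb: "prod_decode n = (r, b)" by (cases "prod_decode n")
  define s where "s = r + b"
  have n: "n = triangle s + r" using prod_decode_inverse[of n] rb by (simp add: prod_encode_def s_def)
  have rs: "r \<le> s + 1" by (simp add: s_def)
  let ?c = "real (min r (nat \<lfloor>u * real (s + 1)\<rfloor> + 1))"
  have split: "grid_count {..u} n = grid_count {..u} (triangle s) + ?c"
    unfolding grid_count_def n sum_lessThan_add using assms rs by (simp add: grid_count_atMost_block)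
  have "real (2 * triangle s) = real (s * Suc s)" by (simp add: triangle_def)
  hence "(2 * real s + 1)\<^sup>2 \<le> 8 * real n + 1"
    using n by (simp add: power2_eq_square algebra_simps)
  hence "2 * real s + 1 \<le> grid_disc n"
    unfolding grid_disc_def by (simp add: real_le_rsqrt)
  moreover have "real r \<le> real r * u + real s + 1"
    using rs assms by (smt (verit) mult_nonneg_nonneg of_nat_0_le_iff of_nat_add of_nat_le_iff s_def)
  moreover have "real n * u = real (triangle s) * u + real r * u" "real n = real (triangle s) + real r"
    using n by (simp_all add: algebra_simps)
  moreover note split floor_block_bounds(1,2)[OF assms rs] grid_count_atMost_triangle[OF assms, of s]
  ultimately show ?thesis by linarith
qed

lemma grid_count_atMost_outside:
  "u < 0 \<Longrightarrow> grid_count {..u} n = 0" "1 \<le> u \<Longrightarrow> grid_count {..u} n = real n"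
  by (auto intro!: grid_count_empty grid_count_full)

lemma grid_count_atMost_ge: "real n * unif01_cdf u \<le> grid_count {..u} n"
  using grid_count_atMost_bounds[of u n] grid_count_atMost_outside[of u n]
  by (cases "u < 0"; cases "u < 1") (auto simp: unif01_cdf_def)

lemma grid_count_atMost_le: "grid_count {..u} n \<le> real n * unif01_cdf u + grid_disc n"
  using grid_count_atMost_bounds[of u n] grid_count_atMost_outside[of u n] grid_disc_nonneg[of n]
  by (cases "u < 0"; cases "u < 1") (auto simp: unif01_cdf_def)

lemma grid_count_lessThan_ge: "real n * unif01_cdf u \<le> grid_count {..<u} n"
proof (cases "0 < u \<and> u \<le> 1 \<and> 0 < n")
  case True
  have "u \<le> grid_count {..<u} n / real n"
  proof (rule dense_le_bounded[of 0 u])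
    fix w assume "0 < w" "w < u"
    hence "real n * w \<le> grid_count {..w} n"
      using grid_count_atMost_ge[of n w] True by (simp add: unif01_cdf_def)
    also have "\<dots> \<le> grid_count {..<u} n" using \<open>w < u\<close> by (intro grid_count_mono) auto
    finally show "w \<le> grid_count {..<u} n / real n" using True by (simp add: field_simps)
  qed (use True in simp)
  thus ?thesis using True by (simp add: unif01_cdf_def field_simps)
next
  case False
  have "1 < u \<Longrightarrow> grid_count {..<u} n = real n" by (auto intro!: grid_count_full)
  with False show ?thesis
    by (cases "u \<le> 0") (auto simp: unif01_cdf_def grid_count_def sum_nonneg)
qed

lemma grid_count_atMost_atLeast:
  assumes "0 \<le> a" "a \<le> 1"
  shows "\<bar>grid_count ({..t} \<inter> {a..}) n - real n * max 0 (unif01_cdf t - a)\<bar> \<le> grid_disc n"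
proof (cases "t < a")
  case True
  hence "grid_count ({..t} \<inter> {a..}) n = 0" "unif01_cdf t \<le> a"
    using assms by (auto simp: grid_count_def unif01_cdf_def)
  thus ?thesis by (simp add: grid_disc_nonneg)
next
  case False
  have "grid_count ({..t} \<inter> {a..}) n = grid_count {..t} n - grid_count {..<a} n"
    using False by (subst grid_count_diff[symmetric]) (auto intro!: arg_cong[where f="\<lambda>A. grid_count A n"])
  moreover have "unif01_cdf a = a" "unif01_cdf a \<le> unif01_cdf t"
    using assms False by (auto simp: unif01_cdf_def)
  moreover have "grid_count {..<a} n \<le> grid_count {..a} n" by (intro grid_count_mono) auto
  moreover note grid_count_atMost_ge[of n t] grid_count_atMost_le[of t n]
    grid_count_lessThan_ge[of n a] grid_count_atMost_le[of a n]
  ultimately show ?thesis by (simp add: algebra_simps abs_le_iff)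
qed

lemma grid_count_singleton: "grid_count {t} n \<le> grid_disc n"
proof -
  have "grid_count {t} n = grid_count {..t} n - grid_count {..<t} n"
    by (subst grid_count_diff[symmetric]) (auto intro!: arg_cong[where f="\<lambda>A. grid_count A n"])
  thus ?thesis using grid_count_atMost_le[of t n] grid_count_lessThan_ge[of n t] by simp
qed

lemma grid_count_atMost_tendsto: "(\<lambda>n. grid_count {..t} n / real n) \<longlonglongrightarrow> unif01_cdf t"
proof (rule tendsto_sandwich[OF _ _ tendsto_const])
  show "(\<lambda>n. unif01_cdf t + grid_disc n / real n) \<longlonglongrightarrow> unif01_cdf t"
    using tendsto_add[OF tendsto_const grid_disc_over_n_tendsto] by simp
  show "\<forall>\<^sub>F n in sequentially. unif01_cdf t \<le> grid_count {..t} n / real n"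
    using eventually_gt_at_top[of 0]
    by eventually_elim (use grid_count_atMost_ge in \<open>simp add: field_simps mult.commute\<close>)
  show "\<forall>\<^sub>F n in sequentially. grid_count {..t} n / real n \<le> unif01_cdf t + grid_disc n / real n"
    using eventually_gt_at_top[of 0]
    by eventually_elim (use grid_count_atMost_le in \<open>simp add: field_simps mult.commute\<close>)
qed

lemma grid_count_singleton_tendsto: "(\<lambda>n. grid_count {t} n / real n) \<longlonglongrightarrow> 0"
proof (rule Lim_null_comparison[OF _ grid_disc_over_n_tendsto])
  show "\<forall>\<^sub>F n in sequentially. norm (grid_count {t} n / real n) \<le> grid_disc n / real n"
    using grid_count_singleton by (intro always_eventually allI)
      (simp add: divide_right_mono grid_count_def sum_nonneg)
qed

section \<open>Dyadic combs\<close>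

lemma total_var_diff_of_mono_le:
  fixes f g :: "real \<Rightarrow> real"
  assumes "mono f" "mono g" "\<And>x. f x \<in> {0..B}" "\<And>x. g x \<in> {0..C}"
  shows "total_var (\<lambda>x. f x - g x) a b \<le> ereal (B + C)"
  unfolding total_var_def
proof (rule SUP_least, clarsimp)
  fix n and t :: "nat \<Rightarrow> real"
  assume inc: "\<forall>i<n. t i < t (Suc i)"
  have "(\<Sum>i<n. \<bar>f (t (Suc i)) - g (t (Suc i)) - (f (t i) - g (t i))\<bar>)
      \<le> (\<Sum>i<n. (f (t (Suc i)) - f (t i)) + (g (t (Suc i)) - g (t i)))"
  proof (intro sum_mono)
    fix i assume "i \<in> {..<n}"
    hence "f (t i) \<le> f (t (Suc i))" "g (t i) \<le> g (t (Suc i))"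
      using inc assms(1,2) by (auto intro: monoD less_imp_le)
    thus "\<bar>f (t (Suc i)) - g (t (Suc i)) - (f (t i) - g (t i))\<bar>
        \<le> (f (t (Suc i)) - f (t i)) + (g (t (Suc i)) - g (t i))" by (simp add: abs_le_iff)
  qed
  also have "\<dots> = (f (t n) - f (t 0)) + (g (t n) - g (t 0))"
    by (simp add: sum.distrib sum_lessThan_telescope[where f="\<lambda>i. f (t i)"]
        sum_lessThan_telescope[where f="\<lambda>i. g (t i)"])
  also have "\<dots> \<le> B + C" using assms(3,4)[of "t n"] assms(3,4)[of "t 0"] by auto
  finally show "(\<Sum>i<n. \<bar>f (t (Suc i)) - g (t (Suc i)) - (f (t i) - g (t i))\<bar>) \<le> B + C" .
qed

lemma total_var_const_le: "total_var (\<lambda>_. c) a b \<le> 0"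
  unfolding total_var_def by (rule SUP_least) (simp add: zero_ereal_def)

definition dyadic_lo :: "nat \<Rightarrow> nat \<Rightarrow> real" where
  "dyadic_lo s j = real j / 2 ^ s"

definition dyadic_mid :: "nat \<Rightarrow> nat \<Rightarrow> real" where
  "dyadic_mid s j = (2 * real j + 1) / 2 ^ (s + 1)"

text \<open>The indicator of the union of the left halves of the dyadic intervals of length 2^(-s) in [0,1).\<close>
definition comb :: "nat \<Rightarrow> real \<Rightarrow> real" where
  "comb s u = (\<Sum>j<2 ^ s. indicator {dyadic_lo s j..} u - indicator {dyadic_mid s j..} u)"

lemma dyadic_lo_mid: "dyadic_lo s j < dyadic_mid s j" "dyadic_mid s j < dyadic_lo s (Suc j)"
  by (auto simp: dyadic_lo_def dyadic_mid_def field_simps)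

lemma dyadic_lo_mid_bounds:
  assumes "j < 2 ^ s"
  shows "0 \<le> dyadic_lo s j" "dyadic_lo s j \<le> 1" "0 \<le> dyadic_mid s j" "dyadic_mid s j \<le> 1"
proof -
  have "real j + 1 \<le> 2 ^ s"
    using assms by (metis Suc_leI of_nat_Suc of_nat_le_iff of_nat_numeral of_nat_power add.commute)
  moreover have "j \<le> 2 ^ s" using assms by simp
  ultimately show "0 \<le> dyadic_lo s j" "dyadic_lo s j \<le> 1" "0 \<le> dyadic_mid s j" "dyadic_mid s j \<le> 1"
    by (auto simp: dyadic_lo_def dyadic_mid_def field_simps)
qed

lemma comb_partial_sum:
  "(\<Sum>j<J. indicator {dyadic_lo s j..} u - indicator {dyadic_mid s j..} u :: real) \<in> {0, 1} \<and>
   (dyadic_lo s J \<le> u \<longrightarrow> (\<Sum>j<J. indicator {dyadic_lo s j..} u - indicator {dyadic_mid s j..} u :: real) = 0)"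
proof (induction J)
  case (Suc J)
  note lo_mid = dyadic_lo_mid[of s J]
  show ?case
  proof (cases "u < dyadic_lo s J")
    case True
    thus ?thesis using Suc lo_mid by (auto simp: indicator_def)
  next
    case False
    thus ?thesis using Suc lo_mid by (auto simp: indicator_def)
  qed
qed simp

lemma comb_01: "comb s u \<in> {0, 1}"
  unfolding comb_def using comb_partial_sum by blast

lemma comb_measurable [measurable]: "comb s \<in> borel_measurable borel"
  unfolding comb_def by measurable

lemma integrable_comb: "integrable unif01 (comb s)"
proof (rule unif01.integrable_const_bound[where B=1])
  have "\<bar>comb s x\<bar> \<le> 1" for x using comb_01[of s x] by auto
  thus "AE x in unif01. norm (comb s x) \<le> 1" by simp
qed simp

lemma total_var_comb: "total_var (comb s) 0 1 < \<infinity>"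
proof -
  have bound: "(\<Sum>j<2 ^ s. indicator {c j..} x :: real) \<in> {0..2 ^ s}" for c :: "nat \<Rightarrow> real" and x
    using sum_bounded_above[of "{..<(2::nat) ^ s}" "\<lambda>j. indicator {c j..} x :: real" 1]
    by (auto simp: sum_nonneg)
  have "total_var (comb s) 0 1 \<le> ereal (2 ^ s + 2 ^ s)"
    unfolding comb_def sum_subtractf
    by (intro total_var_diff_of_mono_le monoI sum_mono bound) (auto simp: indicator_def)
  thus ?thesis by (rule le_less_trans) simp
qed

lemma reg_nu_comb:
  assumes "A \<in> sets borel"
  shows "reg_nu unif01 (comb s) A
       = (\<Sum>j<2 ^ s. measure unif01 (A \<inter> {dyadic_lo s j..}) - measure unif01 (A \<inter> {dyadic_mid s j..}))"
proof -
  have integrable: "integrable unif01 (indicator (A \<inter> {c..}) :: real \<Rightarrow> real)" for c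
    using assms by (intro integrable_real_indicator) (auto simp: unif01.emeasure_finite less_top[symmetric])
  have "indicator A u *\<^sub>R comb s u
      = (\<Sum>j<2 ^ s. indicator (A \<inter> {dyadic_lo s j..}) u - indicator (A \<inter> {dyadic_mid s j..}) u)" for u
    by (simp add: comb_def sum_distrib_left indicator_inter_arith algebra_simps)
  hence "reg_nu unif01 (comb s) A
      = (\<Sum>j<2 ^ s. LINT u|unif01. indicator (A \<inter> {dyadic_lo s j..}) u - indicator (A \<inter> {dyadic_mid s j..}) u)"
    unfolding reg_nu_def set_lebesgue_integral_def
    by (simp add: Bochner_Integration.integral_sum integrable_diff integrable)
  thus ?thesis by (simp add: Bochner_Integration.integral_diff integrable)
qed

text \<open>For v in [0,1], comb_cdf s v is the integral of comb s over [0,v].\<close>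
definition comb_cdf :: "nat \<Rightarrow> real \<Rightarrow> real" where
  "comb_cdf s v = (\<Sum>j<2 ^ s. max 0 (v - dyadic_lo s j) - max 0 (v - dyadic_mid s j))"

lemma reg_nu_comb_atMost: "reg_nu unif01 (comb s) {..t} = comb_cdf s (unif01_cdf t)"
  unfolding reg_nu_comb[OF borel_closed[OF closed_atMost]] comb_cdf_def
  by (intro sum.cong refl) (simp add: measure_unif01_atMost_atLeast dyadic_lo_mid_bounds)

lemma reg_nu_comb_singleton: "reg_nu unif01 (comb s) {t} = 0"
proof -
  have "measure unif01 ({t} \<inter> {c..}) = 0" for c
    by (cases "c \<le> t") (auto simp: measure_unif01_singleton)
  thus ?thesis by (simp add: reg_nu_comb)
qed

lemma comb_cdf_mono:
  assumes "v \<le> w"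
  shows "comb_cdf s v \<le> comb_cdf s w"
  unfolding comb_cdf_def
proof (rule sum_mono)
  fix j
  have "dyadic_lo s j < dyadic_mid s j" by (rule dyadic_lo_mid)
  thus "max 0 (v - dyadic_lo s j) - max 0 (v - dyadic_mid s j)
      \<le> max 0 (w - dyadic_lo s j) - max 0 (w - dyadic_mid s j)"
    using assms by (auto simp: max_def)
qed

lemma comb_cdf_dyadic:
  assumes "J \<le> 2 ^ s"
  shows "comb_cdf s (real J / 2 ^ s) = real J / 2 ^ (s + 1)"
proof -
  have "comb_cdf s (real J / 2 ^ s) = (\<Sum>j<2 ^ s. if j < J then 1 / 2 ^ (s + 1) else 0)"
    unfolding comb_cdf_def
  proof (intro sum.cong refl)
    fix j
    show "max 0 (real J / 2 ^ s - dyadic_lo s j) - max 0 (real J / 2 ^ s - dyadic_mid s j)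
        = (if j < J then 1 / 2 ^ (s + 1) else 0)"
    proof (cases "j < J")
      case True
      hence "real j + 1 \<le> real J" by linarith
      moreover have "dyadic_mid s j = (real j + 1 / 2) / 2 ^ s" by (simp add: dyadic_mid_def field_simps)
      ultimately have "dyadic_mid s j \<le> real J / 2 ^ s" "dyadic_lo s j \<le> real J / 2 ^ s"
        unfolding dyadic_lo_def by (auto intro!: divide_right_mono)
      thus ?thesis using True by (simp add: dyadic_mid_def dyadic_lo_def field_simps)
    next
      case False
      hence "real J / 2 ^ s \<le> dyadic_lo s j" by (auto simp: dyadic_lo_def field_simps)
      thus ?thesis using False dyadic_lo_mid(1)[of s j] by simp
    qed
  qed
  also have "\<dots> = real (card ({..<(2::nat) ^ s} \<inter> {j. j < J})) / 2 ^ (s + 1)"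
    by (simp add: sum.If_cases)
  also have "{..<(2::nat) ^ s} \<inter> {j. j < J} = {..<J}" using assms by auto
  finally show ?thesis by simp
qed

lemma comb_cdf_approx:
  assumes "0 \<le> v" "v \<le> 1"
  shows "\<bar>comb_cdf s v - v / 2\<bar> \<le> 1 / 2 ^ s"
proof (cases "v = 1")
  case True
  have "comb_cdf s 1 * 2 = 1" using comb_cdf_dyadic[of "2 ^ s" s] by simp
  hence "\<bar>comb_cdf s v - v / 2\<bar> = 0" using True by simp
  moreover have "0 \<le> 1 / (2::real) ^ s" by simp
  ultimately show ?thesis by linarith
next
  case False
  define J where "J = nat \<lfloor>v * 2 ^ s\<rfloor>"
  have J_eq: "real J = of_int \<lfloor>v * 2 ^ s\<rfloor>" using assms by (simp add: J_def)
  have J_le: "real J \<le> v * 2 ^ s" unfolding J_eq by (rule of_int_floor_le)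
  have J_gt: "v * 2 ^ s < real J + 1" unfolding J_eq by (rule real_of_int_floor_add_one_gt)
  have "v * 2 ^ s < 2 ^ s" using assms False by simp
  hence "real J < 2 ^ s" using J_le by linarith
  hence "Suc J \<le> 2 ^ s" by (metis Suc_leI of_nat_less_iff of_nat_numeral of_nat_power)
  define a where "a = real J / 2 ^ s"
  have a: "a \<le> v" "v \<le> a + 1 / 2 ^ s"
    using J_le J_gt by (simp_all add: a_def divide_le_eq le_divide_eq add_divide_distrib[symmetric])
  have "comb_cdf s (real J / 2 ^ s) \<le> comb_cdf s v" "comb_cdf s v \<le> comb_cdf s (real (Suc J) / 2 ^ s)"
    using a by (auto intro!: comb_cdf_mono simp: a_def add_divide_distrib)
  moreover have "real J / 2 ^ (s + 1) = a / 2" "real (Suc J) / 2 ^ (s + 1) = a / 2 + 1 / 2 ^ s / 2"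
    by (simp_all add: a_def add_divide_distrib)
  ultimately have "a / 2 \<le> comb_cdf s v" "comb_cdf s v \<le> a / 2 + 1 / 2 ^ s / 2"
    using comb_cdf_dyadic[of J s] comb_cdf_dyadic[of "Suc J" s] \<open>Suc J \<le> 2 ^ s\<close> by auto
  moreover have "0 \<le> 1 / (2::real) ^ s" by simp
  ultimately show ?thesis using a by (simp add: abs_le_iff)
qed

lemma comb_cdf_tendsto: "(\<lambda>s. comb_cdf s (unif01_cdf t)) \<longlonglongrightarrow> unif01_cdf t / 2"
proof -
  have "0 \<le> unif01_cdf t" "unif01_cdf t \<le> 1" by (auto simp: unif01_cdf_def)
  hence "\<bar>comb_cdf s (unif01_cdf t) - unif01_cdf t / 2\<bar> \<le> (1 / 2) ^ s" for s
    using comb_cdf_approx by (simp add: power_one_over)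
  hence "(\<lambda>s. comb_cdf s (unif01_cdf t) - unif01_cdf t / 2) \<longlonglongrightarrow> 0"
    by (intro Lim_null_comparison[OF _ LIMSEQ_realpow_zero[of "1 / 2"]]) auto
  thus ?thesis by (simp add: LIM_zero_iff)
qed

definition comb_disc :: "nat \<Rightarrow> nat \<Rightarrow> real \<Rightarrow> real" where
  "comb_disc s n t = (\<Sum>i<n. comb s (grid i) * indicator {..t} (grid i)) - real n * comb_cdf s (unif01_cdf t)"

lemma comb_disc_bound: "\<bar>comb_disc s n t\<bar> \<le> 2 ^ (s + 1) * grid_disc n"
proof -
  let ?err = "\<lambda>a. grid_count ({..t} \<inter> {a..}) n - real n * max 0 (unif01_cdf t - a)"
  have split: "comb s u * indicator {..t} u
      = (\<Sum>j<2 ^ s. indicator ({..t} \<inter> {dyadic_lo s j..}) u - indicator ({..t} \<inter> {dyadic_mid s j..}) u)" for u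
    unfolding comb_def sum_distrib_right by (simp add: indicator_inter_arith algebra_simps)
  have "(\<Sum>i<n. comb s (grid i) * indicator {..t} (grid i))
      = (\<Sum>j<2 ^ s. grid_count ({..t} \<inter> {dyadic_lo s j..}) n - grid_count ({..t} \<inter> {dyadic_mid s j..}) n)"
    unfolding split grid_count_def by (subst sum.swap) (simp add: sum_subtractf)
  hence "comb_disc s n t = (\<Sum>j<2 ^ s. (grid_count ({..t} \<inter> {dyadic_lo s j..}) n
      - grid_count ({..t} \<inter> {dyadic_mid s j..}) n) - real n * (max 0 (unif01_cdf t - dyadic_lo s j)
      - max 0 (unif01_cdf t - dyadic_mid s j)))"
    unfolding comb_disc_def comb_cdf_def by (simp only: sum_distrib_left sum_subtractf[symmetric])
  also have "\<dots> = (\<Sum>j<2 ^ s. ?err (dyadic_lo s j) - ?err (dyadic_mid s j))"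
    by (intro sum.cong refl) (simp add: algebra_simps)
  also have "\<bar>\<dots>\<bar> \<le> (\<Sum>j<(2::nat) ^ s. 2 * grid_disc n)"
  proof (rule order.trans[OF sum_abs sum_mono])
    fix j assume "j \<in> {..<(2::nat) ^ s}"
    thus "\<bar>?err (dyadic_lo s j) - ?err (dyadic_mid s j)\<bar> \<le> 2 * grid_disc n"
      using grid_count_atMost_atLeast[of "dyadic_lo s j" t n] grid_count_atMost_atLeast[of "dyadic_mid s j" t n]
        dyadic_lo_mid_bounds[of j s] by auto
  qed
  finally show ?thesis by simp
qed

section \<open>Labels drawn from combs of slowly growing rank\<close>

text \<open>The growth bound keeps the factor 4^(\<kappa> n) in labels_disc_bound below (n + 1)^(1/4), so the
  discrepancy of the labels is o(n).\<close>
definition slow_schedule :: "(nat \<Rightarrow> nat) \<Rightarrow> bool" where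
  "slow_schedule \<kappa> \<longleftrightarrow> mono \<kappa> \<and> (\<forall>i. 256 ^ \<kappa> i \<le> i + 1)"

definition labels :: "(nat \<Rightarrow> nat) \<Rightarrow> nat \<Rightarrow> real" where
  "labels \<kappa> i = comb (\<kappa> i) (grid i)"

definition labels_disc :: "(nat \<Rightarrow> nat) \<Rightarrow> nat \<Rightarrow> real \<Rightarrow> real" where
  "labels_disc \<kappa> n t = (\<Sum>i<n. labels \<kappa> i * indicator {..t} (grid i) - comb_cdf (\<kappa> i) (unif01_cdf t))"

lemma labels_01: "labels \<kappa> i \<in> {0, 1}"
  unfolding labels_def by (rule comb_01)

text \<open>Each change of rank between n and n + 1 adds two comb discrepancies to the difference;
  otherwise the difference does not change.\<close>
lemma labels_disc_comb_disc:
  assumes "mono \<kappa>"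
  shows "\<bar>labels_disc \<kappa> n t - comb_disc (\<kappa> n) n t\<bar> \<le> 2 * real (\<kappa> n) * (2 ^ (\<kappa> n + 1) * grid_disc n)"
proof (induction n)
  case 0 show ?case by (simp add: labels_disc_def comb_disc_def grid_disc_nonneg)
next
  case (Suc n)
  define B where "B = (2::real) ^ (\<kappa> (Suc n) + 1) * grid_disc (Suc n)"
  have step: "labels_disc \<kappa> (Suc n) t
      = labels_disc \<kappa> n t + (comb_disc (\<kappa> n) (Suc n) t - comb_disc (\<kappa> n) n t)"
    by (simp add: labels_disc_def comb_disc_def labels_def algebra_simps)
  have \<kappa>_le: "\<kappa> n \<le> \<kappa> (Suc n)" using assms by (simp add: monoD)
  have B_ge: "(2::real) ^ (\<kappa> n + 1) * grid_disc (Suc n) \<le> B"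
    unfolding B_def using \<kappa>_le by (intro mult_right_mono power_increasing grid_disc_nonneg) auto
  have "(2::real) ^ (\<kappa> n + 1) * grid_disc n \<le> 2 ^ (\<kappa> n + 1) * grid_disc (Suc n)"
    by (intro mult_left_mono grid_disc_mono) auto
  hence "2 * real (\<kappa> n) * (2 ^ (\<kappa> n + 1) * grid_disc n) \<le> 2 * real (\<kappa> n) * B"
    using B_ge by (intro mult_left_mono) linarith+
  hence IH: "\<bar>labels_disc \<kappa> n t - comb_disc (\<kappa> n) n t\<bar> \<le> 2 * real (\<kappa> n) * B"
    using Suc.IH by linarith
  show ?case
  proof (cases "\<kappa> (Suc n) = \<kappa> n")
    case True
    thus ?thesis using step IH by (simp add: B_def)
  next
    case False
    hence "2 * real (\<kappa> n) + 2 \<le> 2 * real (\<kappa> (Suc n))" using \<kappa>_le by linarith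
    hence "(2 * real (\<kappa> n) + 2) * B \<le> 2 * real (\<kappa> (Suc n)) * B"
      by (intro mult_right_mono) (simp_all add: B_def grid_disc_nonneg)
    hence "2 * real (\<kappa> n) * B + 2 * B \<le> 2 * real (\<kappa> (Suc n)) * B"
      by (simp add: distrib_right)
    moreover have "\<bar>comb_disc (\<kappa> n) (Suc n) t\<bar> \<le> B"
      using comb_disc_bound[of "\<kappa> n" "Suc n" t] B_ge by linarith
    moreover have "\<bar>comb_disc (\<kappa> (Suc n)) (Suc n) t\<bar> \<le> B"
      using comb_disc_bound unfolding B_def by simp
    ultimately show ?thesis using step IH unfolding B_def[symmetric] by linarith
  qed
qed

lemma labels_disc_bound:
  assumes "slow_schedule \<kappa>"
  shows "\<bar>labels_disc \<kappa> n t\<bar> \<le> 4 * (real n + 1) powr (1 / 4) * grid_disc n"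
proof -
  let ?k = "\<kappa> n"
  have "\<bar>labels_disc \<kappa> n t\<bar> \<le> (2 * real ?k + 1) * (2 ^ (?k + 1) * grid_disc n)"
    using labels_disc_comb_disc[of \<kappa> n t] comb_disc_bound[of ?k n t] assms
    by (simp add: slow_schedule_def algebra_simps)
  also have "\<dots> \<le> 2 ^ (?k + 1) * (2 ^ (?k + 1) * grid_disc n)"
  proof (intro mult_right_mono)
    have "Suc ?k \<le> 2 ^ ?k" using less_exp[of ?k] by (rule Suc_leI)
    hence "2 * ?k + 1 \<le> 2 ^ (?k + 1)" by (simp only: power_add power_one_right)
    hence "real (2 * ?k + 1) \<le> real (2 ^ (?k + 1))" by (simp only: of_nat_le_iff)
    thus "2 * real ?k + 1 \<le> 2 ^ (?k + 1)" by simp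
  qed (simp add: grid_disc_nonneg)
  also have "\<dots> = 4 * 4 ^ ?k * grid_disc n"
    by (simp add: power_mult_distrib[symmetric])
  also have "\<dots> \<le> 4 * (real n + 1) powr (1 / 4) * grid_disc n"
  proof -
    have "256 ^ ?k \<le> n + 1" using assms by (simp add: slow_schedule_def)
    hence "real (256 ^ ?k) \<le> real (n + 1)" by (simp only: of_nat_le_iff)
    moreover have "((4::real) ^ ?k) ^ 4 = (4 ^ 4) ^ ?k" by (metis power_mult mult.commute)
    ultimately have "((4::real) ^ ?k) ^ 4 \<le> real n + 1" by simp
    hence "((4::real) ^ ?k) powr 4 \<le> real n + 1" by (simp add: powr_realpow)
    hence "(((4::real) ^ ?k) powr 4) powr (1 / 4) \<le> (real n + 1) powr (1 / 4)"
      by (intro powr_mono2) auto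
    moreover have "(((4::real) ^ ?k) powr 4) powr (1 / 4) = 4 ^ ?k" by (subst powr_powr) simp
    ultimately have "(4::real) ^ ?k \<le> (real n + 1) powr (1 / 4)" by simp
    thus ?thesis by (intro mult_right_mono mult_left_mono) (auto simp: grid_disc_nonneg)
  qed
  finally show ?thesis .
qed

lemma cesaro_mean_tendsto:
  fixes a :: "nat \<Rightarrow> real"
  assumes "a \<longlonglongrightarrow> L"
  shows "(\<lambda>n. (\<Sum>i<n. a i) / real n) \<longlonglongrightarrow> L"
proof (rule LIMSEQ_I)
  fix e :: real assume e: "0 < e"
  obtain N where N: "\<And>i. i \<ge> N \<Longrightarrow> \<bar>a i - L\<bar> < e / 2"
    using LIMSEQ_D[OF assms, of "e / 2"] e by auto
  define C where "C = (\<Sum>i<N. \<bar>a i - L\<bar>)"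
  obtain M :: nat where M: "2 * C / e < M" using reals_Archimedean2 by blast
  have "\<bar>(\<Sum>i<n. a i) / real n - L\<bar> < e" if n: "max (Suc N) M \<le> n" for n
  proof -
    have "\<bar>\<Sum>i<N. a i - L\<bar> \<le> C" unfolding C_def by (rule sum_abs)
    also have "C < e / 2 * real n"
    proof -
      have "2 * C / e < real n" using M n by linarith
      thus ?thesis using e by (simp add: field_simps)
    qed
    finally have head: "\<bar>\<Sum>i<N. a i - L\<bar> < e / 2 * real n" .
    have "\<bar>\<Sum>j<n - N. a (N + j) - L\<bar> \<le> (\<Sum>j<n - N. e / 2)"
      using N by (intro order.trans[OF sum_abs] sum_mono) (simp add: less_imp_le)
    also have "\<dots> \<le> e / 2 * real n" using e by simp
    finally have tail: "\<bar>\<Sum>j<n - N. a (N + j) - L\<bar> \<le> e / 2 * real n" .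
    have "(\<Sum>i<n. a i - L) = (\<Sum>i<N. a i - L) + (\<Sum>j<n - N. a (N + j) - L)"
      using sum_lessThan_add[of "\<lambda>i. a i - L" N "n - N"] n by simp
    hence "\<bar>\<Sum>i<n. a i - L\<bar> < e * real n" using head tail by linarith
    moreover have "(\<Sum>i<n. a i) / real n - L = (\<Sum>i<n. a i - L) / real n"
      using n by (simp add: sum_subtractf field_simps)
    ultimately show ?thesis using n by (simp add: abs_divide field_simps)
  qed
  thus "\<exists>n0. \<forall>n\<ge>n0. norm ((\<Sum>i<n. a i) / real n - L) < e"
    by (intro exI[of _ "max (Suc N) M"]) simp
qed

lemma labels_disc_over_n_tendsto:
  assumes "slow_schedule \<kappa>"
  shows "(\<lambda>n. labels_disc \<kappa> n t / real n) \<longlonglongrightarrow> 0"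
proof (rule Lim_null_comparison)
  show "(\<lambda>n. 4 * (real n + 1) powr (1 / 4) * grid_disc n / real n) \<longlonglongrightarrow> 0"
    unfolding grid_disc_def by real_asymp
  show "\<forall>\<^sub>F n in sequentially. norm (labels_disc \<kappa> n t / real n)
      \<le> 4 * (real n + 1) powr (1 / 4) * grid_disc n / real n"
    using labels_disc_bound[OF assms] by (intro always_eventually allI) (simp add: abs_divide divide_right_mono)
qed

lemma emp_nu_labels_singleton_tendsto: "(\<lambda>n. emp_nu grid (labels \<kappa>) n {t}) \<longlonglongrightarrow> 0"
proof (rule Lim_null_comparison[OF _ grid_count_singleton_tendsto])
  have "\<bar>\<Sum>i<n. labels \<kappa> i * indicator {t} (grid i)\<bar> \<le> grid_count {t} n" for n
  proof -
    have "\<bar>labels \<kappa> i\<bar> \<le> 1" for i using labels_01[of \<kappa> i] by auto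
    thus ?thesis unfolding grid_count_def
      by (intro order.trans[OF sum_abs sum_mono]) (auto simp: indicator_def)
  qed
  thus "\<forall>\<^sub>F n in sequentially. norm (emp_nu grid (labels \<kappa>) n {t}) \<le> grid_count {t} n / real n"
    by (intro always_eventually allI) (simp add: emp_nu_def abs_divide divide_right_mono)
qed

lemma stable_labels:
  assumes "slow_schedule \<kappa>"
    and cdf: "\<And>t. (\<lambda>i. comb_cdf (\<kappa> i) (unif01_cdf t)) \<longlonglongrightarrow> reg_nu unif01 m {..t}"
    and atom: "\<And>t. reg_nu unif01 m {t} = 0"
  shows "stable unif01 m grid (labels \<kappa>)"
  unfolding stable_def
proof (intro allI conjI)
  fix t
  show "(\<lambda>n. emp_mu grid n {..t}) \<longlonglongrightarrow> measure unif01 {..t}"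
    using grid_count_atMost_tendsto by (simp add: emp_mu_def grid_count_def measure_unif01_atMost)
  show "(\<lambda>n. emp_mu grid n {t}) \<longlonglongrightarrow> measure unif01 {t}"
    using grid_count_singleton_tendsto by (simp add: emp_mu_def grid_count_def measure_unif01_singleton)
  show "(\<lambda>n. emp_nu grid (labels \<kappa>) n {t}) \<longlonglongrightarrow> reg_nu unif01 m {t}"
    unfolding atom by (rule emp_nu_labels_singleton_tendsto)
  have "emp_nu grid (labels \<kappa>) n {..t}
      = labels_disc \<kappa> n t / real n + (\<Sum>i<n. comb_cdf (\<kappa> i) (unif01_cdf t)) / real n" for n
    by (simp add: emp_nu_def labels_disc_def sum_subtractf add_divide_distrib[symmetric])
  thus "(\<lambda>n. emp_nu grid (labels \<kappa>) n {..t}) \<longlonglongrightarrow> reg_nu unif01 m {..t}"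
    using tendsto_add[OF labels_disc_over_n_tendsto[OF assms(1)] cesaro_mean_tendsto[OF cdf]] by simp
qed

lemma stable_labels_comb:
  assumes "slow_schedule \<kappa>" "\<forall>\<^sub>F i in sequentially. \<kappa> i = k"
  shows "stable unif01 (comb k) grid (labels \<kappa>)"
proof (rule stable_labels[OF assms(1) _ reg_nu_comb_singleton])
  fix t
  have "\<forall>\<^sub>F i in sequentially. comb_cdf (\<kappa> i) (unif01_cdf t) = reg_nu unif01 (comb k) {..t}"
    using assms(2) by eventually_elim (simp add: reg_nu_comb_atMost)
  thus "(\<lambda>i. comb_cdf (\<kappa> i) (unif01_cdf t)) \<longlonglongrightarrow> reg_nu unif01 (comb k) {..t}"
    by (rule tendsto_eventually)
qed

lemma stable_labels_half:
  assumes "slow_schedule \<kappa>" "filterlim \<kappa> at_top sequentially"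
  shows "stable unif01 (\<lambda>_. 1 / 2) grid (labels \<kappa>)"
proof (rule stable_labels[OF assms(1)])
  fix t
  show "(\<lambda>i. comb_cdf (\<kappa> i) (unif01_cdf t)) \<longlonglongrightarrow> reg_nu unif01 (\<lambda>_. 1 / 2) {..t}"
    using filterlim_compose[OF comb_cdf_tendsto assms(2)]
    by (simp add: reg_nu_const measure_unif01_atMost)
  show "reg_nu unif01 (\<lambda>_. 1 / 2) {t} = 0"
    by (simp add: reg_nu_const measure_unif01_singleton)
qed

section \<open>The diagonal argument\<close>

lemma nn_integral_sq_dist_half:
  assumes [measurable]: "f \<in> borel_measurable borel" "g \<in> borel_measurable borel"
    and g_01: "\<And>u. g u \<in> {0, 1}"
  shows "ennreal (1 / 8) \<le> (\<integral>\<^sup>+ u. ennreal ((f u - g u)\<^sup>2) \<partial>unif01) + (\<integral>\<^sup>+ u. ennreal ((f u - 1 / 2)\<^sup>2) \<partial>unif01)"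
proof -
  have pointwise: "ennreal (1 / 8) \<le> ennreal ((f u - g u)\<^sup>2) + ennreal ((f u - 1 / 2)\<^sup>2)" for u
  proof -
    have "(g u - 1 / 2)\<^sup>2 = 1 / 4" using g_01[of u] by (auto simp: power2_eq_square)
    moreover have "(g u - 1 / 2)\<^sup>2 \<le> 2 * ((f u - g u)\<^sup>2 + (f u - 1 / 2)\<^sup>2)"
      using sum_squares_ge_zero[of "2 * f u - g u - 1 / 2" 0] by (simp add: power2_eq_square algebra_simps)
    ultimately show ?thesis by (simp flip: ennreal_plus)
  qed
  have "ennreal (1 / 8) = (\<integral>\<^sup>+ u. ennreal (1 / 8) \<partial>unif01)"
    by (simp add: emeasure_unif01_UNIV)
  also have "\<dots> \<le> (\<integral>\<^sup>+ u. ennreal ((f u - g u)\<^sup>2) + ennreal ((f u - 1 / 2)\<^sup>2) \<partial>unif01)"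
    by (intro nn_integral_mono pointwise)
  also have "\<dots> = (\<integral>\<^sup>+ u. ennreal ((f u - g u)\<^sup>2) \<partial>unif01) + (\<integral>\<^sup>+ u. ennreal ((f u - 1 / 2)\<^sup>2) \<partial>unif01)"
    by (intro nn_integral_add) auto
  finally show ?thesis .
qed

text \<open>Stage k freezes the rank at k from M k on; the next threshold M (Suc k) is taken so late
  that the stage-k data are already good there.\<close>
lemma stage_schedules:
  fixes good :: "(nat \<Rightarrow> nat) \<Rightarrow> nat \<Rightarrow> nat \<Rightarrow> bool"
  assumes good_eventually: "\<And>\<kappa> k. slow_schedule \<kappa> \<Longrightarrow> (\<forall>\<^sub>F i in sequentially. \<kappa> i = k)
      \<Longrightarrow> (\<forall>\<^sub>F n in sequentially. good \<kappa> k n)"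
  obtains K :: "nat \<Rightarrow> nat \<Rightarrow> nat" and M :: "nat \<Rightarrow> nat"
  where "\<And>k. slow_schedule (K k)" "\<And>k i. K k i \<le> k" "\<And>k i. M k \<le> i \<Longrightarrow> K k i = k"
    "\<And>k i. K (Suc k) i = (if i < M (Suc k) then K k i else Suc k)"
    "\<And>k. M k < M (Suc k)" "\<And>k. good (K k) k (M (Suc k))"
proof -
  define next_threshold where
    "next_threshold k K0 M0 = (SOME n. M0 < n \<and> 256 ^ Suc k \<le> n + 1 \<and> good K0 k n)" for k K0 M0
  define stage where "stage = rec_nat ((\<lambda>_. 0) :: nat \<Rightarrow> nat, 0 :: nat)
    (\<lambda>k (K0, M0). (\<lambda>i. if i < next_threshold k K0 M0 then K0 i else Suc k, next_threshold k K0 M0))"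
  define K where "K k = fst (stage k)" for k
  define M where "M k = snd (stage k)" for k
  have M_Suc: "M (Suc k) = next_threshold k (K k) (M k)" for k
    by (simp add: K_def M_def stage_def split_beta)
  have K_Suc: "K (Suc k) i = (if i < M (Suc k) then K k i else Suc k)" for k i
    by (simp add: K_def M_def stage_def split_beta)
  define stage_inv where "stage_inv k \<longleftrightarrow> slow_schedule (K k) \<and> (\<forall>i. K k i \<le> k) \<and> (\<forall>i. M k \<le> i \<longrightarrow> K k i = k)" for k
  have next_threshold_spec: "M k < M (Suc k) \<and> 256 ^ Suc k \<le> M (Suc k) + 1 \<and> good (K k) k (M (Suc k))"
    if "stage_inv k" for k
  proof -
    have "\<forall>\<^sub>F n in sequentially. good (K k) k n"
      using that by (intro good_eventually) (auto simp: stage_inv_def eventually_sequentially)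
    moreover have "\<forall>\<^sub>F n in sequentially. M k < n \<and> 256 ^ Suc k \<le> n + 1"
      using eventually_ge_at_top[of "Suc (M k) + 256 ^ Suc k"] by eventually_elim auto
    ultimately have "\<forall>\<^sub>F n in sequentially. M k < n \<and> 256 ^ Suc k \<le> n + 1 \<and> good (K k) k n"
      by eventually_elim auto
    hence "\<exists>n. M k < n \<and> 256 ^ Suc k \<le> n + 1 \<and> good (K k) k n"
      unfolding eventually_sequentially by (meson order_refl)
    thus ?thesis unfolding M_Suc next_threshold_def by (rule someI_ex)
  qed
  have "stage_inv k" for k
  proof (induction k)
    case 0 show ?case by (simp add: stage_inv_def K_def stage_def slow_schedule_def mono_def)
  next
    case (Suc k)
    hence slow: "mono (K k)" "\<And>i. 256 ^ K k i \<le> i + 1" and le: "\<And>i. K k i \<le> k"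
      by (auto simp: stage_inv_def slow_schedule_def)
    note next_k = next_threshold_spec[OF Suc]
    have "mono (K (Suc k))"
    proof (rule monoI)
      fix i j :: nat assume "i \<le> j"
      thus "K (Suc k) i \<le> K (Suc k) j"
        using monoD[OF slow(1) \<open>i \<le> j\<close>] le[of i] by (auto simp: K_Suc)
    qed
    moreover have "256 ^ K (Suc k) i \<le> i + 1" for i
    proof (cases "i < M (Suc k)")
      case False
      thus ?thesis using next_k by (simp add: K_Suc)
    qed (use slow(2)[of i] in \<open>simp add: K_Suc\<close>)
    moreover have "K (Suc k) i \<le> Suc k" for i using le[of i] by (simp add: K_Suc)
    ultimately show ?case by (simp add: stage_inv_def slow_schedule_def K_Suc)
  qed
  with next_threshold_spec show ?thesis by (intro that[of K M]) (auto simp: stage_inv_def K_Suc)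
qed

lemma limit_of_stage_schedules:
  fixes K :: "nat \<Rightarrow> nat \<Rightarrow> nat" and M :: "nat \<Rightarrow> nat"
  assumes slow: "\<And>k. slow_schedule (K k)" and K_le: "\<And>k i. K k i \<le> k"
    and K_final: "\<And>k i. M k \<le> i \<Longrightarrow> K k i = k"
    and K_Suc: "\<And>k i. K (Suc k) i = (if i < M (Suc k) then K k i else Suc k)"
    and M_Suc: "\<And>k. M k < M (Suc k)"
  obtains \<kappa> where "slow_schedule \<kappa>" "filterlim \<kappa> at_top sequentially"
    "\<And>k i. i < M (Suc k) \<Longrightarrow> \<kappa> i = K k i"
proof
  have "strict_mono M" using M_Suc by (simp add: strict_mono_Suc_iff)
  hence M_gt: "i < M (Suc k)" if "i \<le> k" for i k
    using that strict_mono_imp_increasing[of M "Suc k"] by linarith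
  have K_stable: "K m i = K k i" if "k \<le> m" "i < M (Suc k)" for k m i
    using that(1)
  proof (induction rule: dec_induct)
    case (step m)
    have "i < M (Suc m)"
      using that(2) strict_mono_leD[OF \<open>strict_mono M\<close>, of "Suc k" "Suc m"] step(1) by linarith
    thus ?case using step(3) by (simp add: K_Suc)
  qed simp
  define \<kappa> where "\<kappa> i = K i i" for i
  show \<kappa>_K: "\<kappa> i = K k i" if "i < M (Suc k)" for k i
    by (cases "i \<le> k") (simp_all add: \<kappa>_def K_stable M_gt that)
  have "mono \<kappa>"
  proof (rule monoI)
    fix i j :: nat assume "i \<le> j"
    hence "\<kappa> i = K j i" by (intro \<kappa>_K M_gt)
    also have "\<dots> \<le> K j j" using slow[of j] \<open>i \<le> j\<close> by (simp add: slow_schedule_def monoD)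
    finally show "\<kappa> i \<le> \<kappa> j" by (simp add: \<kappa>_def)
  qed
  thus "slow_schedule \<kappa>" using slow by (simp add: slow_schedule_def \<kappa>_def)
  have K_mono_stage: "K k i \<le> K m i" if "k \<le> m" for k m i
    using that by (induction rule: dec_induct) (auto simp: K_Suc intro: le_trans[OF K_le])
  show "filterlim \<kappa> at_top sequentially"
    unfolding filterlim_at_top eventually_sequentially
  proof (intro allI exI[of _ "M _"] impI)
    fix k i assume "M k \<le> i"
    have "k = K k i" using K_final[OF \<open>M k \<le> i\<close>] ..
    also have "\<dots> \<le> K (max i k) i" by (intro K_mono_stage) simp
    also have "\<dots> = \<kappa> i" by (intro \<kappa>_K[symmetric] M_gt) simp
    finally show "k \<le> \<kappa> i" .
  qed
qed

lemma diagonal_schedule: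
  fixes good :: "(nat \<Rightarrow> nat) \<Rightarrow> nat \<Rightarrow> nat \<Rightarrow> bool"
  assumes good_eventually: "\<And>\<kappa> k. slow_schedule \<kappa> \<Longrightarrow> (\<forall>\<^sub>F i in sequentially. \<kappa> i = k)
      \<Longrightarrow> (\<forall>\<^sub>F n in sequentially. good \<kappa> k n)"
    and good_local: "\<And>\<kappa> \<kappa>' k n. (\<And>i. i < n \<Longrightarrow> \<kappa> i = \<kappa>' i) \<Longrightarrow> good \<kappa> k n \<Longrightarrow> good \<kappa>' k n"
  obtains \<kappa> where "slow_schedule \<kappa>" "filterlim \<kappa> at_top sequentially"
    "\<exists>\<^sub>F n in sequentially. \<exists>k. good \<kappa> k n"
proof -
  obtain K M where stages: "\<And>k. slow_schedule (K k)" "\<And>k i. K k i \<le> k" "\<And>k i. M k \<le> i \<Longrightarrow> K k i = k"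
      "\<And>k i. K (Suc k) i = (if i < M (Suc k) then K k i else Suc k)"
    and M_Suc: "\<And>k. M k < M (Suc k)" and good: "\<And>k. good (K k) k (M (Suc k))"
    by (rule stage_schedules[of good]) (blast intro: good_eventually)+
  show ?thesis
  proof (rule limit_of_stage_schedules[OF stages M_Suc])
    fix \<kappa> assume slow: "slow_schedule \<kappa>" and unbounded: "filterlim \<kappa> at_top sequentially"
      and \<kappa>_K: "\<And>k i. i < M (Suc k) \<Longrightarrow> \<kappa> i = K k i"
    have "\<exists>\<^sub>F n in sequentially. \<exists>k. good \<kappa> k n"
      unfolding frequently_sequentially
    proof (intro allI exI conjI)
      fix N
      show "N \<le> M (Suc N)"
        using strict_mono_imp_increasing[of M "Suc N"] M_Suc by (simp add: strict_mono_Suc_iff)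
      show "good \<kappa> N (M (Suc N))" by (rule good_local[OF _ good[of N]]) (simp add: \<kappa>_K)
    qed
    with slow unbounded show ?thesis by (rule that)
  qed
qed

lemma sample_labels_cong:
  "(\<And>i. i < n \<Longrightarrow> \<kappa> i = \<kappa>' i) \<Longrightarrow> sample grid (labels \<kappa>) n = sample grid (labels \<kappa>') n"
  by (simp add: sample_def labels_def)

definition sample_L2_err ::
    "(nat \<Rightarrow> (real \<times> real) list \<Rightarrow> real \<Rightarrow> real) \<Rightarrow> (nat \<Rightarrow> real) \<Rightarrow> (real \<Rightarrow> real) \<Rightarrow> nat \<Rightarrow> ennreal" where
  "sample_L2_err phi y m n = (\<integral>\<^sup>+ u. ennreal ((phi n (sample grid y n) u - m u)\<^sup>2) \<partial>unif01)"

lemma not_consistent_on_labels: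
  assumes "reg_procedure phi"
    and consistent: "\<And>\<kappa> m. m \<in> borel_measurable borel \<Longrightarrow> integrable unif01 m \<Longrightarrow> total_var m 0 1 < \<infinity>
      \<Longrightarrow> stable unif01 m grid (labels \<kappa>) \<Longrightarrow> sample_L2_err phi (labels \<kappa>) m \<longlonglongrightarrow> 0"
  shows False
proof -
  let ?err = "\<lambda>\<kappa> m. sample_L2_err phi (labels \<kappa>) m"
  have small: "\<forall>\<^sub>F n in sequentially. ?err \<kappa> m n < ennreal (1 / 16)" if "?err \<kappa> m \<longlonglongrightarrow> 0" for \<kappa> m
    using order_tendstoD(2)[OF that] by simp
  obtain \<kappa> where slow: "slow_schedule \<kappa>" and unbounded: "filterlim \<kappa> at_top sequentially"
    and close_to_comb: "\<exists>\<^sub>F n in sequentially. \<exists>k. ?err \<kappa> (comb k) n < ennreal (1 / 16)"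
  proof (rule diagonal_schedule)
    fix \<kappa> k assume "slow_schedule \<kappa>" "\<forall>\<^sub>F i in sequentially. \<kappa> i = k"
    thus "\<forall>\<^sub>F n in sequentially. ?err \<kappa> (comb k) n < ennreal (1 / 16)"
      by (intro small consistent comb_measurable integrable_comb total_var_comb stable_labels_comb)
  next
    fix \<kappa> \<kappa>' :: "nat \<Rightarrow> nat" and k n assume "\<And>i. i < n \<Longrightarrow> \<kappa> i = \<kappa>' i"
    hence "sample grid (labels \<kappa>) n = sample grid (labels \<kappa>') n" by (rule sample_labels_cong)
    moreover assume "?err \<kappa> (comb k) n < ennreal (1 / 16)"
    ultimately show "?err \<kappa>' (comb k) n < ennreal (1 / 16)" by (simp add: sample_L2_err_def)
  qed
  have "total_var (\<lambda>_. 1 / 2 :: real) 0 1 < \<infinity>"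
    by (rule le_less_trans[OF total_var_const_le]) simp
  hence "?err \<kappa> (\<lambda>_. 1 / 2) \<longlonglongrightarrow> 0"
    by (intro consistent stable_labels_half slow unbounded unif01.integrable_const) simp_all
  then obtain n k where "?err \<kappa> (comb k) n < ennreal (1 / 16)" "?err \<kappa> (\<lambda>_. 1 / 2) n < ennreal (1 / 16)"
    using frequently_ex[OF frequently_eventually_frequently[OF close_to_comb small]] by blast
  hence "?err \<kappa> (comb k) n + ?err \<kappa> (\<lambda>_. 1 / 2) n < ennreal (1 / 8)"
    using add_mono_ennreal by fastforce
  moreover have "ennreal (1 / 8) \<le> ?err \<kappa> (comb k) n + ?err \<kappa> (\<lambda>_. 1 / 2) n"
    unfolding sample_L2_err_def using assms(1)
    by (intro nn_integral_sq_dist_half comb_measurable comb_01) (simp add: reg_procedure_def)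
  ultimately show False by simp
qed

theorem theorem2:
  fixes phi :: "nat \<Rightarrow> (real \<times> real) list \<Rightarrow> real \<Rightarrow> real"
  assumes "reg_procedure phi"
  shows "\<exists>(m :: real \<Rightarrow> real) (x :: nat \<Rightarrow> real) (y :: nat \<Rightarrow> real).
           m \<in> borel_measurable borel \<and> integrable unif01 m \<and>
           total_var m 0 1 < \<infinity> \<and>
           stable unif01 m x y \<and>
           (\<forall>i. x i \<in> {0..1} \<and> y i \<in> {0, 1}) \<and>
           \<not> ((\<lambda>n. \<integral>\<^sup>+ u. ennreal ((phi n (sample x y n) u - m u)^2) \<partial>unif01) \<longlonglongrightarrow> 0)"
proof (rule ccontr)
  assume no_counterexample: "\<not> ?thesis"
  show False
  proof (rule not_consistent_on_labels[OF assms])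
    fix \<kappa> and m :: "real \<Rightarrow> real"
    assume "m \<in> borel_measurable borel" "integrable unif01 m" "total_var m 0 1 < \<infinity>"
      "stable unif01 m grid (labels \<kappa>)"
    moreover have "\<forall>i. grid i \<in> {0..1} \<and> labels \<kappa> i \<in> {0, 1}"
      using grid_bounds labels_01 by (auto simp: less_imp_le)
    ultimately show "sample_L2_err phi (labels \<kappa>) m \<longlonglongrightarrow> 0"
      using no_counterexample[unfolded not_ex, rule_format, of m grid "labels \<kappa>"]
      unfolding sample_L2_err_def[abs_def] by simp
  qed
qed

end
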